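(* Let $X$ and $Y$ be non-negative absolutely continuous random variables with survival functions $\bar F$, $\bar G$ and hazard rates $h_1(t)=f(t)/\bar F(t)$, $h_2(t)=g(t)/\bar G(t)$, where $f,g$ are their densities, and let $\alpha,\beta>0$. Define, for $t\ge 0$ with $\bar F(t),\bar G(t)>0$, $$R_{\alpha,\beta}(\bar F,\bar G,t)=\int_t^\infty\left(\frac{\bar F(x)}{\bar F(t)}\right)^{\alpha}\left(\frac{\bar G(x)}{\bar G(t)}\right)^{\beta}dx$$ (assumed finite). Then $$\frac{d}{dt}R_{\alpha,\beta}(\bar F,\bar G,t)=\big(\beta h_2(t)+\alpha h_1(t)\big)R_{\alpha,\beta}(\bar F,\bar G,t)-1.$$
   Context: $R_{\alpha,\beta}(\bar F,\bar G,t)$ is the dynamic relative cumulative residual information (DRCRI) measure between the residual lives $X_t=(X-t\mid X>t)$ and $Y_t=(Y-t\mid Y>t)$. *)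

theory Defs
  imports "HOL-Probability.Probability"
begin

definition survival :: "'a measure \<Rightarrow> ('a \<Rightarrow> real) \<Rightarrow> real \<Rightarrow> real" where
  "survival M X x = measure M {\<omega> \<in> space M. x < X \<omega>}"

definition hazard :: "(real \<Rightarrow> real) \<Rightarrow> (real \<Rightarrow> real) \<Rightarrow> real \<Rightarrow> real" where
  "hazard f Fbar t = f t / Fbar t"

definition DRCRI :: "real \<Rightarrow> real \<Rightarrow> (real \<Rightarrow> real) \<Rightarrow> (real \<Rightarrow> real) \<Rightarrow> real \<Rightarrow> real" where
  "DRCRI \<alpha> \<beta> Fbar Gbar t =
     integral {t..} (\<lambda>x. (Fbar x / Fbar t) powr \<alpha> * (Gbar x / Gbar t) powr \<beta>)"

end

theory Submission
  imports Defs
begin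

(* With \<phi> = Fbar^\<alpha> Gbar^\<beta>, the DRCRI is the ratio R(t) = \<Phi>(t) / \<phi>(t) of the tail
   integral \<Phi>(t) = \<integral>_t^\<infinity> \<phi> to its integrand. A survival function is the tail integral
   of the density, so Fbar' = -f and Gbar' = -g at continuity points of f and g; hence
   \<Phi>' = -\<phi> and \<phi>'/\<phi> = -(\<alpha> h1 + \<beta> h2), and the quotient rule gives
   R' = -1 + (\<alpha> h1 + \<beta> h2) R. *)

lemma integrable_density:
  assumes "prob_space M" and D: "distributed M lborel X (\<lambda>x. ennreal (f x))"
    and nonneg: "\<And>x. 0 \<le> f x"
  shows "integrable lborel f"
proof -
  have "integrable M (\<lambda>_. 1::real)"
    using \<open>prob_space M\<close> by (simp add: prob_space.finite_measure finite_measure.integrable_const)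
  moreover have "integrable lborel (\<lambda>x. f x * 1) = integrable M (\<lambda>_. 1::real)"
    by (rule distributed_integrable[OF D]) (simp_all add: nonneg)
  ultimately show ?thesis by simp
qed

lemma survival_eq_integral_density:
  assumes "prob_space M" and D: "distributed M lborel X (\<lambda>x. ennreal (f x))"
    and nonneg: "\<And>x. 0 \<le> f x"
  shows "survival M X s = integral {s..} f"
proof -
  have [measurable]: "f \<in> borel_measurable lborel"
    by (rule distributed_real_measurable[OF _ D]) (simp add: nonneg)
  have f_int: "integrable lborel f"
    using integrable_density[OF assms] .
  have "survival M X s = enn2real (emeasure M (X -` {s<..} \<inter> space M))"
    unfolding survival_def measure_def by (rule arg_cong[where f="\<lambda>A. enn2real (emeasure M A)"]) blast
  also have "\<dots> = enn2real (\<integral>\<^sup>+x. ennreal (f x) * indicator {s<..} x \<partial>lborel)"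
    using distributed_emeasure[OF D, of "{s<..}"] by simp
  also have "\<dots> = (LINT x|lborel. f x * indicator {s<..} x)"
    by (rule enn2real_nn_integral_eq_integral) (auto simp: indicator_def nonneg)
  also have "\<dots> = integral {s<..} f"
    using set_borel_integral_eq_integral(2)[of "{s<..}" f] integrable_real_mult_indicator[OF _ f_int]
    by (simp add: set_integrable_def set_lebesgue_integral_def mult.commute)
  also have "\<dots> = integral {s..} f"
  proof (rule integral_subset_negligible)
    have "{s..} - {s<..} = {s}" by auto
    then show "negligible ({s..} - {s<..})" by simp
  qed auto
  finally show ?thesis .
qed

lemma absolutely_integrable_on_if_integrable_lborel:
  fixes h :: "'a::euclidean_space \<Rightarrow> real"
  assumes "integrable lborel h" and "S \<in> sets lborel"
  shows "h absolutely_integrable_on S"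
proof -
  have "integrable lebesgue h"
    using assms(1) by (simp add: integrable_completion borel_measurable_integrable)
  then show ?thesis
    unfolding set_integrable_def using assms(2) by (intro integrable_mult_indicator) auto
qed

lemma integral_atLeast_split:
  fixes h :: "real \<Rightarrow> real"
  assumes h: "h absolutely_integrable_on {a..}" and "a \<le> s"
  shows "integral {s..} h = integral {a..} h - integral {a..s} h"
proof -
  have "h integrable_on {a..s}" "h integrable_on {s..}"
    using set_integrable_subset[OF h] \<open>a \<le> s\<close>
    by (auto intro: set_lebesgue_integral_eq_integral(1))
  then have "(h has_integral (integral {a..s} h + integral {s..} h)) ({a..s} \<union> {s..})"
  proof (intro has_integral_Un)
    have "{a..s} \<inter> {s..} = {s}" using \<open>a \<le> s\<close> by auto
    then show "negligible ({a..s} \<inter> {s..})" by simp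
  qed auto
  moreover have "{a..s} \<union> {s..} = {a..}" using \<open>a \<le> s\<close> by auto
  ultimately show ?thesis by (simp add: integral_unique)
qed

lemma tail_integral_eventually_eq:
  fixes h :: "real \<Rightarrow> real"
  assumes h: "h absolutely_integrable_on {a..}" and "a < x"
  shows "\<forall>\<^sub>F s in nhds x. integral {s..} h = integral {a..} h - integral {a..s} h"
  using eventually_nhds_in_open[of "{a<..}" x] \<open>a < x\<close>
  by (auto elim!: eventually_mono intro: integral_atLeast_split[OF h])

lemma isCont_tail_integral:
  fixes h :: "real \<Rightarrow> real"
  assumes h: "h absolutely_integrable_on {a..}" and "a < x"
  shows "isCont (\<lambda>s. integral {s..} h) x"
proof -
  have "h integrable_on {a..x+1}"
    using set_integrable_subset[OF h, of "{a..x+1}"] by (auto intro: set_lebesgue_integral_eq_integral(1))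
  then have "continuous_on {a..x+1} (\<lambda>s. integral {a..s} h)"
    by (rule indefinite_integral_continuous_1)
  then have "isCont (\<lambda>s. integral {a..} h - integral {a..s} h) x"
    using \<open>a < x\<close> by (intro continuous_intros continuous_on_interior[of "{a..x+1}"]) auto
  then show ?thesis
    using isCont_cong[OF tail_integral_eventually_eq[OF assms]] by simp
qed

lemma has_real_derivative_tail_integral:
  fixes h :: "real \<Rightarrow> real"
  assumes h: "h absolutely_integrable_on {a..}" and "a < t" and "isCont h t"
  shows "((\<lambda>s. integral {s..} h) has_real_derivative - h t) (at t)"
proof -
  have "h integrable_on {a..t+1}"
    using set_integrable_subset[OF h, of "{a..t+1}"] by (auto intro: set_lebesgue_integral_eq_integral(1))
  then have "((\<lambda>s. integral {a..s} h) has_vector_derivative h t) (at t within {a..t+1})"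
    using \<open>a < t\<close> \<open>isCont h t\<close>
    by (intro integral_has_vector_derivative_continuous_at[where S="{}", simplified])
      (auto intro: continuous_at_imp_continuous_within)
  moreover have "at t within {a..t+1} = at t"
    using \<open>a < t\<close> by (intro at_within_Icc_at) auto
  ultimately have "((\<lambda>s. integral {a..s} h) has_real_derivative h t) (at t)"
    by (simp add: has_real_derivative_iff_has_vector_derivative)
  then have "((\<lambda>s. integral {a..} h - integral {a..s} h) has_real_derivative - h t) (at t)"
    by (auto intro!: derivative_eq_intros)
  then show ?thesis
    using DERIV_cong_ev[OF refl tail_integral_eventually_eq[OF assms(1,2)] refl] by simp
qed

lemma isCont_survival:
  assumes "prob_space M" and "distributed M lborel X (\<lambda>x. ennreal (f x))" and "\<And>x. 0 \<le> f x"
  shows "isCont (survival M X) x"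
proof -
  have "f absolutely_integrable_on {x-1..}"
    by (simp add: absolutely_integrable_on_if_integrable_lborel integrable_density[OF assms])
  then show ?thesis
    unfolding survival_eq_integral_density[OF assms, abs_def] by (rule isCont_tail_integral) simp
qed

lemma has_real_derivative_survival:
  assumes "prob_space M" and "distributed M lborel X (\<lambda>x. ennreal (f x))" and "\<And>x. 0 \<le> f x"
    and "isCont f t"
  shows "(survival M X has_real_derivative - f t) (at t)"
proof -
  have "f absolutely_integrable_on {t-1..}"
    by (simp add: absolutely_integrable_on_if_integrable_lborel integrable_density[OF assms(1-3)])
  then show ?thesis
    unfolding survival_eq_integral_density[OF assms(1-3), abs_def]
    by (rule has_real_derivative_tail_integral) (simp_all add: \<open>isCont f t\<close>)
qed

lemma has_real_derivative_tail_integral_divide: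
  fixes \<phi> :: "real \<Rightarrow> real"
  assumes \<phi>: "\<phi> absolutely_integrable_on {a..}" and "a < t"
    and \<phi>_deriv: "(\<phi> has_real_derivative - c * \<phi> t) (at t)" and "\<phi> t \<noteq> 0"
  shows "((\<lambda>s. integral {s..} \<phi> / \<phi> s) has_real_derivative
           c * (integral {t..} \<phi> / \<phi> t) - 1) (at t)"
proof -
  have "((\<lambda>s. integral {s..} \<phi>) has_real_derivative - \<phi> t) (at t)"
    using \<phi> \<open>a < t\<close> DERIV_isCont[OF \<phi>_deriv] by (rule has_real_derivative_tail_integral)
  then have "((\<lambda>s. integral {s..} \<phi> / \<phi> s) has_real_derivative
      (- \<phi> t * \<phi> t - integral {t..} \<phi> * (- c * \<phi> t)) / (\<phi> t * \<phi> t)) (at t)"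
    using \<open>\<phi> t \<noteq> 0\<close> by (intro DERIV_divide[OF _ \<phi>_deriv]) simp
  then show ?thesis
    by (rule DERIV_cong) (use \<open>\<phi> t \<noteq> 0\<close> in \<open>simp add: field_simps\<close>)
qed

lemma has_real_derivative_DRCRI:
  fixes F G f g :: "real \<Rightarrow> real"
  assumes "\<alpha> > 0" and "\<beta> > 0"
    and F_nonneg: "\<And>x. 0 \<le> F x" and G_nonneg: "\<And>x. 0 \<le> G x"
    and F_cont: "\<And>x. isCont F x" and G_cont: "\<And>x. isCont G x"
    and F_deriv: "(F has_real_derivative - f t) (at t)"
    and G_deriv: "(G has_real_derivative - g t) (at t)"
    and "F t > 0" and "G t > 0"
    and integrable: "(\<lambda>x. (F x / F t) powr \<alpha> * (G x / G t) powr \<beta>) integrable_on {t..}"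
  shows "(DRCRI \<alpha> \<beta> F G has_real_derivative
           (\<beta> * hazard g G t + \<alpha> * hazard f F t) * DRCRI \<alpha> \<beta> F G t - 1) (at t)"
proof -
  define \<phi> where "\<phi> x = F x powr \<alpha> * G x powr \<beta>" for x
  have \<phi>_t: "\<phi> t > 0"
    using \<open>F t > 0\<close> \<open>G t > 0\<close> by (simp add: \<phi>_def)
  have ratio_eq: "(F x / F s) powr \<alpha> * (G x / G s) powr \<beta> = \<phi> x / \<phi> s" for x s
    unfolding \<phi>_def using F_nonneg G_nonneg by (simp add: powr_divide)
  have DRCRI_eq: "DRCRI \<alpha> \<beta> F G = (\<lambda>s. integral {s..} \<phi> / \<phi> s)"
    unfolding DRCRI_def ratio_eq by (intro ext integral_divide)
  have "(\<lambda>x. \<phi> x / \<phi> t * \<phi> t) integrable_on {t..}"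
    using integrable_on_cmult_right[OF integrable[unfolded ratio_eq], of "\<phi> t"] by simp
  then have "\<phi> integrable_on {t..}"
    using \<phi>_t by simp
  moreover have "\<phi> integrable_on {t-1..t}"
    \<comment> \<open>continuity of F and G is needed only here: the tail integral must exist left of t too\<close>
    using F_cont G_cont F_nonneg G_nonneg \<open>\<alpha> > 0\<close> \<open>\<beta> > 0\<close> unfolding \<phi>_def isCont_def
    by (intro integrable_continuous_real continuous_at_imp_continuous_on ballI iffD2[OF isCont_def]
        tendsto_mult tendsto_powr' tendsto_const) auto
  ultimately have "\<phi> absolutely_integrable_on {t-1..t} \<union> {t..}"
    by (intro absolutely_integrable_Un nonnegative_absolutely_integrable_1) (auto simp: \<phi>_def)
  moreover have "{t-1..t} \<union> {t..} = {t-1..}" by auto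
  moreover have "(\<phi> has_real_derivative - (\<beta> * hazard g G t + \<alpha> * hazard f F t) * \<phi> t) (at t)"
    unfolding \<phi>_def[abs_def]
    by (rule DERIV_cong[OF DERIV_mult[OF DERIV_powr[OF F_deriv \<open>F t > 0\<close> DERIV_const]
          DERIV_powr[OF G_deriv \<open>G t > 0\<close> DERIV_const]]])
      (simp add: hazard_def field_simps)
  ultimately show ?thesis
    unfolding DRCRI_eq using \<phi>_t by (intro has_real_derivative_tail_integral_divide) auto
qed

theorem mainTheorem2:
  fixes M :: "'a measure" and X Y :: "'a \<Rightarrow> real" and f g :: "real \<Rightarrow> real"
    and \<alpha> \<beta> t :: real
  assumes "prob_space M"
    and "distributed M lborel X (\<lambda>x. ennreal (f x))"
    and "distributed M lborel Y (\<lambda>x. ennreal (g x))"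
    and "\<And>x. 0 \<le> f x" and "\<And>x. 0 \<le> g x"
    and "AE \<omega> in M. 0 \<le> X \<omega>" and "AE \<omega> in M. 0 \<le> Y \<omega>"
    and "\<alpha> > 0" and "\<beta> > 0" and "t \<ge> 0"
    and "survival M X t > 0" and "survival M Y t > 0"
    and "isCont f t" and "isCont g t"
    and "(\<lambda>x. (survival M X x / survival M X t) powr \<alpha> *
              (survival M Y x / survival M Y t) powr \<beta>) integrable_on {t..}"
  shows "((\<lambda>s. DRCRI \<alpha> \<beta> (survival M X) (survival M Y) s) has_real_derivative
           ((\<beta> * hazard g (survival M Y) t + \<alpha> * hazard f (survival M X) t)
              * DRCRI \<alpha> \<beta> (survival M X) (survival M Y) t - 1)) (at t)"
proof (rule has_real_derivative_DRCRI)
  show "0 \<le> survival M X x" "0 \<le> survival M Y x" for x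
    by (simp_all add: survival_def)
  show "isCont (survival M X) x" "isCont (survival M Y) x" for x
    using isCont_survival assms(1-5) by blast+
  show "(survival M X has_real_derivative - f t) (at t)" "(survival M Y has_real_derivative - g t) (at t)"
    using has_real_derivative_survival assms(1-5,13,14) by blast+
qed (use assms in auto)

end
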